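(* Fix $k\ge2$ and let $\delta:[n]\times[k]\to[n]$ be a uniformly random $k$-map. The probability that $\delta$ has a sink state or a sink pair is $O(n^{-k+1})$ as $n\to\infty$ (with implied constant at most $1+\frac{(k+1)^{2k}}{2(k-1)!}$).
   Context: $\delta_\alpha(i):=\delta(i,\alpha)$. A state $i$ is a sink state if $\delta_\alpha(i)=i$ for all $\alpha\in[k]$. Two distinct states $\{i,j\}$ form a sink pair if the set $N_{ij}=\{i,j,\delta_1(i),\delta_1(j),\dots,\delta_k(i),\delta_k(j)\}$ has cardinality at most $k+1$. *)

theory Defs
  imports "HOL-Probability.Probability"
begin

text \<open>States are [n] = {0..<n}, letters are [k] = {0..<k} (0-based indexing).
  A k-map is a function delta : [n] x [k] -> [n], represented as an extensional
  function on the product set.\<close>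

definition kmaps :: "nat \<Rightarrow> nat \<Rightarrow> (nat \<times> nat \<Rightarrow> nat) set" where
  "kmaps n k = ({0..<n} \<times> {0..<k}) \<rightarrow>\<^sub>E {0..<n}"

definition sink_state :: "nat \<Rightarrow> (nat \<times> nat \<Rightarrow> nat) \<Rightarrow> nat \<Rightarrow> bool" where
  "sink_state k \<delta> i \<longleftrightarrow> (\<forall>\<alpha>\<in>{0..<k}. \<delta> (i, \<alpha>) = i)"

definition sink_pair :: "nat \<Rightarrow> (nat \<times> nat \<Rightarrow> nat) \<Rightarrow> nat \<Rightarrow> nat \<Rightarrow> bool" where
  "sink_pair k \<delta> i j \<longleftrightarrow> i \<noteq> j \<and>
     card ({i, j} \<union> (\<lambda>\<alpha>. \<delta> (i, \<alpha>)) ` {0..<k} \<union> (\<lambda>\<alpha>. \<delta> (j, \<alpha>)) ` {0..<k}) \<le> k + 1"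

definition has_sink_state_or_pair :: "nat \<Rightarrow> nat \<Rightarrow> (nat \<times> nat \<Rightarrow> nat) \<Rightarrow> bool" where
  "has_sink_state_or_pair n k \<delta> \<longleftrightarrow>
     (\<exists>i\<in>{0..<n}. sink_state k \<delta> i) \<or>
     (\<exists>i\<in>{0..<n}. \<exists>j\<in>{0..<n}. sink_pair k \<delta> i j)"

end

theory Submission
  imports Defs
begin

text \<open>
  Write D = [n] x [k]; a uniform k-map is a
  uniform element of the n^(nk) functions D -> [n].
  (1) If state i is a sink, the k values delta(i,_) are forced: at most n^(nk-k) maps.
  (2) If {i,j} is a sink pair, the set N_ij has at most k+1 elements and lies in [n], so
      it extends to a (k+1)-set S containing i and j, and all 2k values delta(i,_),
      delta(j,_) lie in S: at most (k+1)^(2k) n^(nk-2k) maps for each choice of S and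
      of the pair {i,j} inside S.
  The union bound over the n states, the (n choose k+1) sets S and the (k+1 choose 2)
  pairs gives the count in count_sink_maps.  Dividing by n^(nk) and using
  (n choose k+1) (k+1)! <= n^(k+1) turns it into the bound
  (1 + (k+1)^(2k) / (2 (k-1)!)) n^(1-k), valid for every n >= k+1.
\<close>

lemma card_PiE_prescribed:
  assumes "finite D" "R \<subseteq> D"
  shows "card (PiE D (\<lambda>x. if x \<in> R then C else B)) = card C ^ card R * card B ^ (card D - card R)"
proof -
  have "card (PiE D (\<lambda>x. if x \<in> R then C else B)) = (\<Prod>x\<in>D. if x \<in> R then card C else card B)"
    using assms by (simp add: card_PiE if_distrib)
  also have "\<dots> = card C ^ card (D \<inter> {x. x \<in> R}) * card B ^ card (D \<inter> - {x. x \<in> R})"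
    using assms by (simp add: prod.If_cases)
  also have "D \<inter> {x. x \<in> R} = R" using assms by auto
  also have "D \<inter> - {x. x \<in> R} = D - R" by auto
  also have "card (D - R) = card D - card R"
    using assms by (simp add: card_Diff_subset finite_subset)
  finally show ?thesis .
qed

lemma extend_to_card:
  assumes "finite U" "X \<subseteq> U" "card X \<le> m" "m \<le> card U"
  obtains S where "X \<subseteq> S" "S \<subseteq> U" "card S = m"
proof -
  have fX: "finite X" using assms finite_subset by blast
  have "m - card X \<le> card (U - X)" using assms by (simp add: card_Diff_subset fX)
  then obtain T where T: "T \<subseteq> U - X" "card T = m - card X" "finite T"
    by (metis obtain_subset_with_card_n)
  have "card (X \<union> T) = card X + card T"
    using T fX by (subst card_Un_disjoint) auto
  then show ?thesis using T assms by (intro that[of "X \<union> T"]) auto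
qed

definition sink_state_maps :: "nat \<Rightarrow> nat \<Rightarrow> nat \<Rightarrow> (nat \<times> nat \<Rightarrow> nat) set" where
  "sink_state_maps n k i =
     PiE ({0..<n} \<times> {0..<k}) (\<lambda>x. if x \<in> {i} \<times> {0..<k} then {i} else {0..<n})"

definition confined_maps :: "nat \<Rightarrow> nat \<Rightarrow> nat set \<Rightarrow> nat set \<Rightarrow> (nat \<times> nat \<Rightarrow> nat) set" where
  "confined_maps n k S P =
     PiE ({0..<n} \<times> {0..<k}) (\<lambda>x. if x \<in> P \<times> {0..<k} then S else {0..<n})"

lemma card_sink_state_maps:
  assumes "i < n"
  shows "card (sink_state_maps n k i) = n ^ (n * k - k)"
  unfolding sink_state_maps_def
  by (subst card_PiE_prescribed) (use assms in \<open>auto simp: card_cartesian_product\<close>)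

lemma card_confined_maps:
  assumes "P \<subseteq> {0..<n}" "card P = 2"
  shows "card (confined_maps n k S P) = card S ^ (2 * k) * n ^ (n * k - 2 * k)"
proof -
  have "finite P" using assms finite_subset by blast
  then show ?thesis
    unfolding confined_maps_def
    by (subst card_PiE_prescribed) (use assms in \<open>auto simp: card_cartesian_product\<close>)
qed

lemma sink_state_in_sink_state_maps:
  assumes "\<delta> \<in> kmaps n k" "sink_state k \<delta> i"
  shows "\<delta> \<in> sink_state_maps n k i"
  using assms by (auto simp: kmaps_def sink_state_maps_def sink_state_def PiE_iff)

lemma sink_pair_confined:
  assumes km: "\<delta> \<in> kmaps n k" and n: "k + 1 \<le> n"
    and ij: "i < n" "j < n" "sink_pair k \<delta> i j"
  obtains S where "S \<subseteq> {0..<n}" "card S = k + 1" "{i, j} \<subseteq> S" "card {i, j} = 2"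
    "\<delta> \<in> confined_maps n k S {i, j}"
proof -
  define N where "N = {i, j} \<union> (\<lambda>\<alpha>. \<delta> (i, \<alpha>)) ` {0..<k} \<union> (\<lambda>\<alpha>. \<delta> (j, \<alpha>)) ` {0..<k}"
  have "i \<noteq> j" and "card N \<le> k + 1" using ij by (auto simp: sink_pair_def N_def)
  moreover have "N \<subseteq> {0..<n}" using km ij by (auto simp: N_def kmaps_def PiE_iff)
  ultimately obtain S where S: "N \<subseteq> S" "S \<subseteq> {0..<n}" "card S = k + 1"
    using extend_to_card[of "{0..<n}" N "k + 1"] n by auto
  have "\<delta> \<in> confined_maps n k S {i, j}"
    using km S by (auto simp: confined_maps_def kmaps_def PiE_iff N_def)
  then show ?thesis using S \<open>i \<noteq> j\<close> by (intro that) (auto simp: N_def)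
qed

lemma bad_maps_covered:
  assumes "k + 1 \<le> n"
  defines "SS \<equiv> {S. S \<subseteq> {0..<n} \<and> card S = k + 1}"
    and "PP \<equiv> \<lambda>S. {P. P \<subseteq> S \<and> card P = 2}"
  shows "{\<delta> \<in> kmaps n k. has_sink_state_or_pair n k \<delta>}
    \<subseteq> (\<Union>i\<in>{0..<n}. sink_state_maps n k i) \<union> (\<Union>S\<in>SS. \<Union>P\<in>PP S. confined_maps n k S P)"
proof
  fix \<delta> assume "\<delta> \<in> {\<delta> \<in> kmaps n k. has_sink_state_or_pair n k \<delta>}"
  then have km: "\<delta> \<in> kmaps n k" and bad: "has_sink_state_or_pair n k \<delta>" by auto
  show "\<delta> \<in> (\<Union>i\<in>{0..<n}. sink_state_maps n k i) \<union> (\<Union>S\<in>SS. \<Union>P\<in>PP S. confined_maps n k S P)"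
    using bad unfolding has_sink_state_or_pair_def
  proof (elim disjE bexE)
    fix i assume "i \<in> {0..<n}" "sink_state k \<delta> i"
    then show ?thesis using sink_state_in_sink_state_maps[OF km] by blast
  next
    fix i j assume "i \<in> {0..<n}" "j \<in> {0..<n}" "sink_pair k \<delta> i j"
    then obtain S where "S \<subseteq> {0..<n}" "card S = k + 1" "{i, j} \<subseteq> S" "card {i, j} = 2"
        "\<delta> \<in> confined_maps n k S {i, j}"
      using sink_pair_confined[OF km assms(1)] by auto
    then have "S \<in> SS" "{i, j} \<in> PP S" "\<delta> \<in> confined_maps n k S {i, j}"
      by (simp_all add: SS_def PP_def)
    then show ?thesis by blast
  qed
qed

lemma count_sink_maps:
  assumes n: "k + 1 \<le> n"
  shows "card {\<delta> \<in> kmaps n k. has_sink_state_or_pair n k \<delta>}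
    \<le> n * n ^ (n * k - k) + (n choose (k + 1)) * ((k + 1) choose 2) * ((k + 1) ^ (2 * k) * n ^ (n * k - 2 * k))"
proof -
  define SS where "SS = {S. S \<subseteq> {0..<n} \<and> card S = k + 1}"
  define PP where "PP S = {P. P \<subseteq> S \<and> card P = 2}" for S :: "nat set"
  define b where "b = (k + 1) ^ (2 * k) * n ^ (n * k - 2 * k)"
  have fSS: "finite SS" unfolding SS_def by (rule finite_subset[of _ "Pow {0..<n}"]) auto
  have fin_S: "finite S" "card S = k + 1" "S \<subseteq> {0..<n}" if "S \<in> SS" for S
    using that by (auto simp: SS_def intro: finite_subset)
  have fPP: "finite (PP S)" "card (PP S) = (k + 1) choose 2" if "S \<in> SS" for S
    using fin_S[OF that] by (auto simp: PP_def n_subsets intro: finite_subset[of _ "Pow S"])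
  have card_conf: "card (confined_maps n k S P) = b" if "S \<in> SS" "P \<in> PP S" for S P
    using that fin_S[OF that(1)] by (auto simp: PP_def b_def card_confined_maps)
  have fin_sink: "finite (sink_state_maps n k i)" for i
    by (simp add: sink_state_maps_def finite_PiE)
  have fin_conf: "finite (confined_maps n k S P)" if "S \<in> SS" for S P
    using fin_S[OF that] by (simp add: confined_maps_def finite_PiE)
  have cover: "{\<delta> \<in> kmaps n k. has_sink_state_or_pair n k \<delta>}
      \<subseteq> (\<Union>i\<in>{0..<n}. sink_state_maps n k i) \<union> (\<Union>S\<in>SS. \<Union>P\<in>PP S. confined_maps n k S P)"
    using bad_maps_covered[OF n] by (simp only: SS_def PP_def)
  have "card {\<delta> \<in> kmaps n k. has_sink_state_or_pair n k \<delta>}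
      \<le> card ((\<Union>i\<in>{0..<n}. sink_state_maps n k i) \<union> (\<Union>S\<in>SS. \<Union>P\<in>PP S. confined_maps n k S P))"
    using fSS fPP(1) fin_sink fin_conf by (intro card_mono[OF _ cover]) auto
  also have "\<dots> \<le> card (\<Union>i\<in>{0..<n}. sink_state_maps n k i) + card (\<Union>S\<in>SS. \<Union>P\<in>PP S. confined_maps n k S P)"
    by (rule card_Un_le)
  also have "card (\<Union>i\<in>{0..<n}. sink_state_maps n k i) \<le> (\<Sum>i\<in>{0..<n}. card (sink_state_maps n k i))"
    by (rule card_UN_le) simp
  also have "\<dots> = n * n ^ (n * k - k)" by (simp add: card_sink_state_maps)
  also have "card (\<Union>S\<in>SS. \<Union>P\<in>PP S. confined_maps n k S P)
      \<le> (\<Sum>S\<in>SS. \<Sum>P\<in>PP S. card (confined_maps n k S P))"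
    using fSS fPP by (intro order.trans[OF card_UN_le] sum_mono card_UN_le) auto
  also have "\<dots> = (\<Sum>S\<in>SS. ((k + 1) choose 2) * b)"
    using card_conf fPP by (intro sum.cong) auto
  also have "\<dots> = (n choose (k + 1)) * ((k + 1) choose 2) * b"
    by (simp add: SS_def n_subsets)
  finally show ?thesis by (simp add: b_def)
qed

text \<open>(k+1 choose 2) * 2 * (k-1)! = (k+1)!, which turns the pair count into a factorial.\<close>
lemma choose_two_times_fact:
  assumes "k \<ge> 1"
  shows "((k + 1) choose 2) * 2 * fact (k - 1) = (fact (k + 1) :: nat)"
proof -
  have "((k + 1) choose 2) * 2 = (k + 1) * k" by (simp add: choose_two)
  moreover have "fact (k + 1) = (k + 1) * k * (fact (k - 1) :: nat)"
    using assms fact_reduce[where 'a=nat and n=k] by (simp add: algebra_simps)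
  ultimately show ?thesis by simp
qed

lemma normalized_count_bound:
  fixes k n :: nat
  assumes k: "k \<ge> 1" and n: "k + 1 \<le> n"
  shows "real (n * n ^ (n * k - k) + (n choose (k + 1)) * ((k + 1) choose 2) * ((k + 1) ^ (2 * k) * n ^ (n * k - 2 * k)))
     / real n ^ (n * k)
     \<le> (1 + real ((k + 1) ^ (2 * k)) / (2 * fact (k - 1))) * real n powr (- real k + 1)"
proof -
  define x where "x = real n"
  define C where "C = real ((n choose (k + 1)) * ((k + 1) choose 2))"
  define M where "M = real ((k + 1) ^ (2 * k))"
  define F :: real where "F = fact (k - 1)"
  have x0: "x > 0" using n by (simp add: x_def)
  have F0: "F > 0" by (simp add: F_def)
  have "C * (2 * F) = real ((n choose (k + 1)) * fact (k + 1))"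
    using choose_two_times_fact[OF k, symmetric] by (simp add: C_def F_def mult.assoc)
  also have "\<dots> \<le> x ^ (k + 1)"
    unfolding x_def of_nat_power[symmetric] by (rule of_nat_mono, rule binomial_fact_pow)
  finally have pairs: "C * (2 * F) \<le> x ^ (k + 1)" .
  have split1: "x ^ (n * k) = x ^ (n * k - k) * x ^ k"
    using n by (simp add: power_add[symmetric])
  have split2: "x ^ (n * k) = x ^ (n * k - 2 * k) * x ^ (2 * k)"
    using n by (subst power_add[symmetric]) (simp add: le_diff_conv2)
  have lhs: "real (n * n ^ (n * k - k) + (n choose (k + 1)) * ((k + 1) choose 2) * ((k + 1) ^ (2 * k) * n ^ (n * k - 2 * k)))
     / real n ^ (n * k) = x / x ^ k + C * M / x ^ (2 * k)"
  proof -
    have "real (n * n ^ (n * k - k) + (n choose (k + 1)) * ((k + 1) choose 2) * ((k + 1) ^ (2 * k) * n ^ (n * k - 2 * k)))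
        / real n ^ (n * k) = x * x ^ (n * k - k) / x ^ (n * k) + C * M * x ^ (n * k - 2 * k) / x ^ (n * k)"
      by (simp add: x_def C_def M_def add_divide_distrib)
    also have "x * x ^ (n * k - k) / x ^ (n * k) = x / x ^ k"
      using x0 by (subst split1) simp
    also have "C * M * x ^ (n * k - 2 * k) / x ^ (n * k) = C * M / x ^ (2 * k)"
      using x0 by (subst split2) simp
    finally show ?thesis .
  qed
  have sq: "x ^ (2 * k) = x ^ k * x ^ k" by (simp add: mult_2 power_add)
  have "C * M / x ^ (2 * k) = (C * (2 * F)) * (M / (2 * F)) / (x ^ k * x ^ k)"
    using F0 unfolding sq by simp
  also have "\<dots> \<le> x ^ (k + 1) * (M / (2 * F)) / (x ^ k * x ^ k)"
    using pairs F0 x0 by (intro divide_right_mono mult_right_mono) (auto simp: M_def)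
  also have "\<dots> = M / (2 * F) * (x / x ^ k)"
    using x0 by (simp add: field_simps)
  finally have second: "C * M / x ^ (2 * k) \<le> M / (2 * F) * (x / x ^ k)" .
  have "real n powr (- real k + 1) = real n powr 1 / real n powr real k"
    by (metis add.commute diff_conv_add_uminus powr_diff)
  also have "\<dots> = x / x ^ k" using x0 by (simp add: x_def powr_realpow)
  finally have power: "real n powr (- real k + 1) = x / x ^ k" .
  have "x / x ^ k + C * M / x ^ (2 * k) \<le> (1 + M / (2 * F)) * (x / x ^ k)"
    using second by (simp only: distrib_right mult_1_left)
  then show ?thesis unfolding lhs power M_def F_def .
qed

theorem mainTheorem3:
  fixes k :: nat
  assumes "k \<ge> 2"
  shows "\<exists>N. \<forall>n\<ge>N.
    measure_pmf.prob (pmf_of_set (kmaps n k)) {\<delta>. has_sink_state_or_pair n k \<delta>}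
      \<le> (1 + real ((k + 1) ^ (2 * k)) / (2 * fact (k - 1))) * real n powr (- real k + 1)"
proof (intro exI[of _ "k + 1"] allI impI)
  fix n assume n: "k + 1 \<le> n"
  have fin: "finite (kmaps n k)" and ne: "kmaps n k \<noteq> {}"
    using n by (auto simp: kmaps_def finite_PiE PiE_eq_empty_iff)
  have card: "card (kmaps n k) = n ^ (n * k)" by (simp add: kmaps_def card_PiE)
  have "measure_pmf.prob (pmf_of_set (kmaps n k)) {\<delta>. has_sink_state_or_pair n k \<delta>}
      = real (card {\<delta> \<in> kmaps n k. has_sink_state_or_pair n k \<delta>}) / real n ^ (n * k)"
    by (simp add: measure_pmf_of_set[OF ne fin] card Int_def)
  also have "\<dots> \<le> real (n * n ^ (n * k - k) + (n choose (k + 1)) * ((k + 1) choose 2)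
                 * ((k + 1) ^ (2 * k) * n ^ (n * k - 2 * k))) / real n ^ (n * k)"
    by (intro divide_right_mono of_nat_mono count_sink_maps[OF n]) simp
  also have "\<dots> \<le> (1 + real ((k + 1) ^ (2 * k)) / (2 * fact (k - 1))) * real n powr (- real k + 1)"
    using assms n by (intro normalized_count_bound) auto
  finally show "measure_pmf.prob (pmf_of_set (kmaps n k)) {\<delta>. has_sink_state_or_pair n k \<delta>}
      \<le> (1 + real ((k + 1) ^ (2 * k)) / (2 * fact (k - 1))) * real n powr (- real k + 1)" .
qed

end
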